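(* Let $r\in\mathbb{N}$ with $r\ge2$, let $u,v,w\in\mathbb{YF}^r$, and let $i,j\in\{1,\dots,r\}$ with $i\ne j$. Then $$d_r(w1_iu,\,v1_ju)\le d_r(w1_iu,\,v2u),$$ where juxtaposition denotes concatenation of words.
   Context: Fix $r\in\mathbb{N}$. Words. Vertices of $\mathbb{YF}^r$ are finite words over $\{1_1,\dots,1_r,2\}$. A letter $1_i$ is a one with digit value $1$; $2$ is a two with digit value $2$. $|x|$ is the digit sum. The graph $\mathbb{YF}^r$. It is graded by $|\cdot|$. From $x$ there is a downward edge to every word obtained by one of two operations: (i) delete the leftmost one; (ii) replace a $2$ lying left of the leftmost one (any $2$ if there are no ones) by $1_i$, with arbitrary $i$. Path counts. $d_r(x,y)$ is the number of downward paths $y=y_n\to\dots\to y_m=x$ in $\mathbb{YF}^r$ with $|y_i|=i$ ($0$ if none). *)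

theory Defs
  imports Main
begin

datatype letter = One nat | Two

type_synonym word = "letter list"

fun digit :: "letter \<Rightarrow> nat" where
  "digit (One i) = 1"
| "digit Two = 2"

definition dsum :: "word \<Rightarrow> nat" where
  "dsum x = (\<Sum>a\<leftarrow>x. digit a)"

definition in_YF :: "nat \<Rightarrow> word \<Rightarrow> bool" where
  "in_YF r x \<longleftrightarrow> (\<forall>a\<in>set x. a = Two \<or> (\<exists>i. a = One i \<and> 1 \<le> i \<and> i \<le> r))"

definition down :: "nat \<Rightarrow> word \<Rightarrow> word \<Rightarrow> bool" where
  "down r x y \<longleftrightarrow>
     (\<exists>p k s. x = p @ One k # s \<and> set p \<subseteq> {Two} \<and> y = p @ s) \<or>
     (\<exists>p s i. x = p @ Two # s \<and> set p \<subseteq> {Two} \<and> 1 \<le> i \<and> i \<le> r \<and> y = p @ One i # s)"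

definition d :: "nat \<Rightarrow> word \<Rightarrow> word \<Rightarrow> nat" where
  "d r x y = card {ps. ps \<noteq> [] \<and> hd ps = y \<and> last ps = x \<and>
      (\<forall>k < length ps. dsum (ps ! k) = dsum y - k) \<and>
      (\<forall>k. Suc k < length ps \<longrightarrow> down r (ps ! k) (ps ! Suc k))}"

end

theory Submission
  imports Defs
begin

(* As long as a path from v 1_j u downwards keeps the suffix 1_j u, each of its steps acts to the
   left of the marked 1_j, so the same steps are legal with that 1_j replaced by 2. Since i \<noteq> j,
   a path ending at w 1_i u must eventually delete the marked letter; it is then the leftmost one,
   so everything to its left is a 2, and the edge 2 -> 1_j can be spliced in at that moment, after
   which the original path continues unchanged. The new vertex is the first one of the new path that
   ends in 1_j u, so the original path can be read back off the new one: this is an injection from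
   the paths starting at v 1_j u into those starting at v 2 u. *)

section \<open>Rerouting paths of a relation\<close>

definition paths :: "('a \<Rightarrow> 'a \<Rightarrow> bool) \<Rightarrow> 'a \<Rightarrow> 'a \<Rightarrow> 'a list set" where
  "paths R y x = {ps. ps \<noteq> [] \<and> hd ps = y \<and> last ps = x \<and> successively R ps}"

lemma successively_length_le:
  fixes \<mu> :: "'a \<Rightarrow> nat"
  assumes "successively R ps" and "\<And>a b. R a b \<Longrightarrow> \<mu> b < \<mu> a"
  shows "length ps \<le> Suc (\<mu> (hd ps))"
  using assms(1) by (induction ps rule: induct_list012) (auto dest: assms(2))

lemma successively_rtranclp_hd:
  "successively R ps \<Longrightarrow> z \<in> set ps \<Longrightarrow> R\<^sup>*\<^sup>* (hd ps) z"
  by (induction ps rule: induct_list012) (auto intro: converse_rtranclp_into_rtranclp)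

lemma finite_paths:
  fixes \<mu> :: "'a \<Rightarrow> nat"
  assumes "finite {z. R\<^sup>*\<^sup>* y z}" and "\<And>a b. R a b \<Longrightarrow> \<mu> b < \<mu> a"
  shows "finite (paths R y x)"
proof (rule finite_subset)
  show "paths R y x \<subseteq> {ps. set ps \<subseteq> {z. R\<^sup>*\<^sup>* y z} \<and> length ps \<le> Suc (\<mu> y)}"
  proof
    fix ps
    assume "ps \<in> paths R y x"
    then have "hd ps = y" "successively R ps"
      by (simp_all add: paths_def)
    then show "ps \<in> {ps. set ps \<subseteq> {z. R\<^sup>*\<^sup>* y z} \<and> length ps \<le> Suc (\<mu> y)}"
      using successively_rtranclp_hd[of R ps] successively_length_le[of R ps \<mu>, OF _ assms(2)] by auto
  qed
  show "finite \<dots>"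
    using assms(1) by (rule finite_lists_length_le)
qed

definition reroute :: "('a \<Rightarrow> 'a) \<Rightarrow> 'a set \<Rightarrow> 'a list \<Rightarrow> 'a list" where
  "reroute f A ps =
     map f (takeWhile (\<lambda>z. z \<in> A) ps) @ last (takeWhile (\<lambda>z. z \<in> A) ps) # dropWhile (\<lambda>z. z \<in> A) ps"

lemma reroute_in_paths:
  assumes lift: "\<And>a b. a \<in> A \<Longrightarrow> b \<in> A \<Longrightarrow> R a b \<Longrightarrow> R (f a) (f b)"
    and exit: "\<And>a b. a \<in> A \<Longrightarrow> b \<notin> A \<Longrightarrow> R a b \<Longrightarrow> R (f a) a"
    and "y \<in> A" "x \<notin> A" and ps: "ps \<in> paths R y x"
  shows "reroute f A ps \<in> paths R (f y) x"
proof -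
  define pre post where "pre = takeWhile (\<lambda>z. z \<in> A) ps" and "post = dropWhile (\<lambda>z. z \<in> A) ps"
  have ps_eq: "ps = pre @ post"
    by (simp add: pre_def post_def)
  have "ps \<noteq> []" "hd ps = y" "last ps = x" "successively R ps"
    using ps by (auto simp: paths_def)
  have pre: "pre \<noteq> []" "hd pre = y" "set pre \<subseteq> A"
    using \<open>ps \<noteq> []\<close> \<open>hd ps = y\<close> \<open>y \<in> A\<close> by (auto simp: pre_def neq_Nil_conv dest: set_takeWhileD)
  have post: "post \<noteq> []"
  proof
    assume "post = []"
    then have "x \<in> set pre"
      using \<open>ps \<noteq> []\<close> \<open>last ps = x\<close> ps_eq by (metis append_Nil2 last_in_set)
    with pre(3) \<open>x \<notin> A\<close> show False by blast
  qed
  have "hd post \<notin> A"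
    using hd_dropWhile[of "\<lambda>z. z \<in> A" ps] post by (simp add: post_def)
  have "last post = x"
    using \<open>last ps = x\<close> post by (simp add: ps_eq)
  have "successively R pre" "successively R post" "R (last pre) (hd post)"
    using \<open>successively R ps\<close> pre(1) post(1) by (simp_all add: ps_eq successively_append_iff)
  moreover have "successively R (map f pre)"
    using \<open>successively R pre\<close> pre(3) by (auto simp: successively_map intro: successively_mono lift)
  moreover have "R (f (last pre)) (last pre)"
    using \<open>R (last pre) (hd post)\<close> pre post \<open>hd post \<notin> A\<close> by (intro exit) auto
  ultimately have "successively R (map f pre @ last pre # post)"
    using pre(1) post(1) by (auto simp: successively_append_iff successively_Cons last_map)
  then show ?thesis
    using pre post \<open>last post = x\<close> by (simp add: reroute_def paths_def hd_map pre_def[symmetric] post_def[symmetric])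
qed

lemma reroute_split:
  assumes "ps \<noteq> []" "hd ps \<in> A" and leaves: "\<And>a. a \<in> A \<Longrightarrow> f a \<notin> A"
  shows "takeWhile (\<lambda>z. z \<notin> A) (reroute f A ps) = map f (takeWhile (\<lambda>z. z \<in> A) ps)"
    and "dropWhile (\<lambda>z. z \<notin> A) (reroute f A ps) =
           last (takeWhile (\<lambda>z. z \<in> A) ps) # dropWhile (\<lambda>z. z \<in> A) ps"
proof -
  define pre where "pre = takeWhile (\<lambda>z. z \<in> A) ps"
  have "pre \<noteq> []"
    using assms(1,2) by (cases ps) (simp_all add: pre_def)
  then have "last pre \<in> A"
    unfolding pre_def using last_in_set set_takeWhileD by metis
  moreover have "\<And>z. z \<in> set (map f pre) \<Longrightarrow> z \<notin> A"
    using leaves by (auto simp: pre_def dest: set_takeWhileD)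
  ultimately show "takeWhile (\<lambda>z. z \<notin> A) (reroute f A ps) = map f pre"
    and "dropWhile (\<lambda>z. z \<notin> A) (reroute f A ps) = last pre # dropWhile (\<lambda>z. z \<in> A) ps"
    unfolding reroute_def pre_def[symmetric] by (subst takeWhile_append2 dropWhile_append2; auto)+
qed

lemma inj_on_reroute:
  assumes inj: "inj_on f A" and leaves: "\<And>a. a \<in> A \<Longrightarrow> f a \<notin> A"
  shows "inj_on (reroute f A) {ps. ps \<noteq> [] \<and> hd ps \<in> A}"
proof
  fix a b
  assume "a \<in> {ps. ps \<noteq> [] \<and> hd ps \<in> A}" "b \<in> {ps. ps \<noteq> [] \<and> hd ps \<in> A}"
    and eq: "reroute f A a = reroute f A b"
  then have "a \<noteq> []" "hd a \<in> A" "b \<noteq> []" "hd b \<in> A"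
    by simp_all
  note split_a = reroute_split[of a A f, OF \<open>a \<noteq> []\<close> \<open>hd a \<in> A\<close> leaves]
  note split_b = reroute_split[of b A f, OF \<open>b \<noteq> []\<close> \<open>hd b \<in> A\<close> leaves]
  have "inj_on f (set (takeWhile (\<lambda>z. z \<in> A) a) \<union> set (takeWhile (\<lambda>z. z \<in> A) b))"
    using inj by (rule inj_on_subset) (auto dest: set_takeWhileD)
  moreover have "map f (takeWhile (\<lambda>z. z \<in> A) a) = map f (takeWhile (\<lambda>z. z \<in> A) b)"
    using split_a(1) split_b(1) eq by simp
  ultimately have "takeWhile (\<lambda>z. z \<in> A) a = takeWhile (\<lambda>z. z \<in> A) b"
    by (simp add: inj_on_map_eq_map)
  moreover have "dropWhile (\<lambda>z. z \<in> A) a = dropWhile (\<lambda>z. z \<in> A) b"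
    using split_a(2) split_b(2) eq by simp
  ultimately show "a = b"
    by (metis takeWhile_dropWhile_id)
qed

lemma card_paths_le_rerouted:
  assumes inj: "inj_on f A" and leaves: "\<And>a. a \<in> A \<Longrightarrow> f a \<notin> A"
    and lift: "\<And>a b. a \<in> A \<Longrightarrow> b \<in> A \<Longrightarrow> R a b \<Longrightarrow> R (f a) (f b)"
    and exit: "\<And>a b. a \<in> A \<Longrightarrow> b \<notin> A \<Longrightarrow> R a b \<Longrightarrow> R (f a) a"
    and "y \<in> A" "x \<notin> A" "finite (paths R (f y) x)"
  shows "card (paths R y x) \<le> card (paths R (f y) x)"
proof (rule card_inj_on_le)
  have "inj_on (reroute f A) {ps. ps \<noteq> [] \<and> hd ps \<in> A}"
    using inj leaves by (rule inj_on_reroute)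
  then show "inj_on (reroute f A) (paths R y x)"
    by (rule inj_on_subset) (use \<open>y \<in> A\<close> in \<open>auto simp: paths_def\<close>)
  have "reroute f A ps \<in> paths R (f y) x" if "ps \<in> paths R y x" for ps
    using lift exit \<open>y \<in> A\<close> \<open>x \<notin> A\<close> that by (rule reroute_in_paths)
  then show "reroute f A ` paths R y x \<subseteq> paths R (f y) x"
    by blast
qed fact

section \<open>Downward edges of YF^r\<close>

lemma dsum_simps [simp]:
  "dsum [] = 0" "dsum (a # x) = digit a + dsum x" "dsum (x @ y) = dsum x + dsum y"
  by (simp_all add: dsum_def)

lemma downE [consumes 1, case_names delete replace]:
  assumes "down r x y"
  obtains (delete) p k s where "x = p @ One k # s" "set p \<subseteq> {Two}" "y = p @ s"
    | (replace) p s i where "x = p @ Two # s" "set p \<subseteq> {Two}" "1 \<le> i" "i \<le> r" "y = p @ One i # s"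
  using assms unfolding down_def by blast

lemma down_deleteI: "set p \<subseteq> {Two} \<Longrightarrow> down r (p @ One k # s) (p @ s)"
  unfolding down_def by blast

lemma down_replaceI:
  "set p \<subseteq> {Two} \<Longrightarrow> 1 \<le> i \<Longrightarrow> i \<le> r \<Longrightarrow> down r (p @ Two # s) (p @ One i # s)"
  unfolding down_def by blast

lemma down_Nil [simp]: "\<not> down r [] y"
  by (auto elim: downE)

lemma down_Two_Cons:
  assumes "down r x y"
  shows "down r (Two # x) (Two # y)"
  using assms
proof (cases rule: downE)
  case (delete p k s)
  then show ?thesis
    using down_deleteI[of "Two # p" r k s] by simp
next
  case (replace p s i)
  then show ?thesis
    using down_replaceI[of "Two # p" i r s] by simp
qed

lemma down_One [simp]: "down r (One k # x) y \<longleftrightarrow> y = x"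
proof
  show "down r (One k # x) y \<Longrightarrow> y = x"
    by (erule downE) (auto simp: Cons_eq_append_conv)
  show "y = x \<Longrightarrow> down r (One k # x) y"
    using down_deleteI[of "[]" r k x] by simp
qed

lemma down_Two [simp]:
  "down r (Two # x) y \<longleftrightarrow>
     (\<exists>i. 1 \<le> i \<and> i \<le> r \<and> y = One i # x) \<or> (\<exists>y'. y = Two # y' \<and> down r x y')"
proof
  assume "down r (Two # x) y"
  then show "(\<exists>i. 1 \<le> i \<and> i \<le> r \<and> y = One i # x) \<or> (\<exists>y'. y = Two # y' \<and> down r x y')"
  proof (cases rule: downE)
    case (delete p k s)
    then obtain p' where "p = Two # p'" "set p' \<subseteq> {Two}"
      by (cases p) auto
    with delete show ?thesis
      using down_deleteI[of p' r k s] by auto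
  next
    case (replace p s i)
    show ?thesis
    proof (cases p)
      case Nil
      with replace show ?thesis
        by auto
    next
      case (Cons a p')
      with replace show ?thesis
        using down_replaceI[of p' i r s] by auto
    qed
  qed
next
  show "(\<exists>i. 1 \<le> i \<and> i \<le> r \<and> y = One i # x) \<or> (\<exists>y'. y = Two # y' \<and> down r x y') \<Longrightarrow>
      down r (Two # x) y"
    using down_replaceI[of "[]" _ r x] by (auto intro: down_Two_Cons)
qed

lemma down_Cons:
  "down r (a # x) y \<longleftrightarrow>
     (case a of
        One k \<Rightarrow> y = x
      | Two \<Rightarrow> (\<exists>i. 1 \<le> i \<and> i \<le> r \<and> y = One i # x) \<or> (\<exists>y'. y = Two # y' \<and> down r x y'))"
  by (cases a) simp_all

lemma dsum_down: "down r x y \<Longrightarrow> dsum x = Suc (dsum y)"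
  by (induction x arbitrary: y) (auto simp: down_Cons split: letter.splits)

lemma length_down_le: "down r x y \<Longrightarrow> length y \<le> length x"
  by (induction x arbitrary: y) (auto simp: down_Cons split: letter.splits)

lemma set_down_subset: "down r x y \<Longrightarrow> set y \<subseteq> insert Two (set x \<union> One ` {1..r})"
  by (induction x arbitrary: y) (fastforce simp: down_Cons split: letter.splits)+

lemma down_One_suffix:
  "down r (q @ One j # u) (q' @ One j # u) \<Longrightarrow> down r (q @ Two # u) (q' @ Two # u)"
proof (induction q arbitrary: q')
  case (Cons a q)
  then show ?case
    by (cases a) (auto simp: Cons_eq_append_conv append_eq_Cons_conv)
qed simp

lemma down_leaving_One_suffix:
  "down r (q @ One j # u) y \<Longrightarrow> \<forall>q'. y \<noteq> q' @ One j # u \<Longrightarrow> set q \<subseteq> {Two}"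
proof (induction q arbitrary: y)
  case (Cons a q)
  have leaves: "y \<noteq> q' @ One j # u" for q'
    using Cons.prems(2) by blast
  show ?case
  proof (cases a)
    case (One k)
    with Cons.prems(1) leaves[of q] show ?thesis
      by simp
  next
    case Two
    with Cons.prems(1) leaves[of "One _ # q"] obtain y' where "y = Two # y'" "down r (q @ One j # u) y'"
      by auto
    moreover have "\<forall>q'. y' \<noteq> q' @ One j # u"
      using leaves[of "Two # _"] \<open>y = Two # y'\<close> by simp
    ultimately show ?thesis
      using Cons.IH Two by simp
  qed
qed simp

lemma finite_down_reachable: "finite {z. (down r)\<^sup>*\<^sup>* y z}"
proof (rule finite_subset)
  let ?L = "insert Two (set y \<union> One ` {1..r})"
  show "{z. (down r)\<^sup>*\<^sup>* y z} \<subseteq> {z. set z \<subseteq> ?L \<and> length z \<le> length y}"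
  proof
    fix z
    assume "z \<in> {z. (down r)\<^sup>*\<^sup>* y z}"
    then have "(down r)\<^sup>*\<^sup>* y z"
      by simp
    then show "z \<in> {z. set z \<subseteq> ?L \<and> length z \<le> length y}"
      by (induction rule: rtranclp_induct) (fastforce dest: set_down_subset length_down_le)+
  qed
  show "finite {z. set z \<subseteq> ?L \<and> length z \<le> length y}"
    by (rule finite_lists_length_le) simp
qed

lemma dsum_nth_path:
  assumes "successively (down r) ps" "k < length ps"
  shows "dsum (ps ! k) + k = dsum (hd ps)"
  using assms(2)
proof (induction k)
  case 0
  then show ?case
    by (simp add: hd_conv_nth)
next
  case (Suc k)
  then have "down r (ps ! k) (ps ! Suc k)"
    using assms(1) by (simp add: successively_nth)
  with Suc show ?case
    using dsum_down by fastforce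
qed

lemma d_eq_card_paths: "d r x y = card (paths (down r) y x)"
proof -
  have "\<forall>k < length ps. dsum (ps ! k) = dsum y - k"
    if "hd ps = y" "successively (down r) ps" for ps
    using dsum_nth_path[OF that(2)] that(1) by (metis add_diff_cancel_right')
  then show ?thesis
    unfolding d_def paths_def by (metis successively_conv_nth)
qed

lemma append_Cons_eq_append_Cons_iff: "q @ a # u = q' @ b # u \<longleftrightarrow> q = q' \<and> a = b"
  using append_same_eq[of "q @ [a]" u "q' @ [b]"] by simp

lemma card_paths_One_le_Two:
  assumes "1 \<le> j" "j \<le> r" and "\<forall>q. x \<noteq> q @ One j # u"
  shows "card (paths (down r) (v @ One j # u) x) \<le> card (paths (down r) (v @ Two # u) x)"
proof -
  let ?A = "range (\<lambda>q. q @ One j # u)"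
  define swap where "swap z = take (length z - Suc (length u)) z @ Two # u" for z
  have swap: "swap (q @ One j # u) = q @ Two # u" for q
    by (simp add: swap_def)
  have "card (paths (down r) (v @ One j # u) x) \<le> card (paths (down r) (swap (v @ One j # u)) x)"
  proof (rule card_paths_le_rerouted)
    show "inj_on swap ?A"
      by (auto simp: inj_on_def swap)
    show "swap a \<notin> ?A" if "a \<in> ?A" for a
      using that by (auto simp: swap append_Cons_eq_append_Cons_iff)
    show "down r (swap a) (swap b)" if "a \<in> ?A" "b \<in> ?A" "down r a b" for a b
      using that by (auto simp: swap intro: down_One_suffix)
    show "down r (swap a) a" if "a \<in> ?A" "b \<notin> ?A" "down r a b" for a b
    proof -
      obtain q where a: "a = q @ One j # u"
        using \<open>a \<in> ?A\<close> by blast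
      have "set q \<subseteq> {Two}"
        using down_leaving_One_suffix[of r q j u b] that a by blast
      then show ?thesis
        using a assms(1,2) by (simp add: swap down_replaceI)
    qed
    show "v @ One j # u \<in> ?A" "x \<notin> ?A"
      using assms(3) by auto
    show "finite (paths (down r) (swap (v @ One j # u)) x)"
      by (rule finite_paths[where \<mu> = dsum]) (simp_all add: finite_down_reachable dsum_down)
  qed
  then show ?thesis
    by (simp add: swap)
qed

theorem mainTheorem10:
  fixes r i j :: nat and u v w :: word
  assumes "r \<ge> 2"
    and "in_YF r u" and "in_YF r v" and "in_YF r w"
    and "1 \<le> i" and "i \<le> r" and "1 \<le> j" and "j \<le> r" and "i \<noteq> j"
  shows "d r (w @ One i # u) (v @ One j # u) \<le> d r (w @ One i # u) (v @ Two # u)"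
proof -
  have "\<forall>q. w @ One i # u \<noteq> q @ One j # u"
    using \<open>i \<noteq> j\<close> by (simp add: append_Cons_eq_append_Cons_iff)
  with \<open>1 \<le> j\<close> \<open>j \<le> r\<close> show ?thesis
    unfolding d_eq_card_paths by (rule card_paths_One_le_Two)
qed

end
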